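(* There is an algorithm which, given an order-3 symmetric tensor $T\in(\mathbb{C}^n)^{\otimes 3}$ and a matrix $V\in M_{n,r}(\mathbb{C})$ with $r\le n$, outputs $s_1,\dots,s_r$ with $s_i=\mathrm{Tr}(S_i)$ for all $i\in[r]$, where $S_1,\dots,S_r$ are the slices of $S=(V\otimes V\otimes V).T\in(\mathbb{C}^r)^{\otimes 3}$, using $O(n^3)$ arithmetic operations.
   Context: The $k$-th slice of a tensor $T=(T_{ijk})$ is the matrix $T_k=(T_{ijk})_{i,j}$. For $A\in\mathbb{C}^{n\times r}$, $(A\otimes A\otimes A).T\in(\mathbb{C}^r)^{\otimes3}$ is defined by $\big((A\otimes A\otimes A).T\big)_{i_1i_2i_3}=\sum_{j_1,j_2,j_3=1}^n A_{j_1i_1}A_{j_2i_2}A_{j_3i_3}T_{j_1j_2j_3}$. Arithmetic operations are exact operations over $\mathbb{C}$. *)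

theory Defs
  imports Complex_Main
begin

text \<open>Algebraic cost model: straight-line programs over the complex numbers.
  Each instruction produces one new value; operands refer (0-based) to values
  produced by strictly earlier instructions.  Reading an input entry or a
  constant is free; each of Add, Sub, Mul, Div is one arithmetic operation.
  Inputs: the tensor T (entry T i j k, 0-based indices < n) and the matrix
  V (entry V j i, row j < n, column i < r).\<close>

datatype slp_instr =
    InT nat nat nat
  | InV nat nat
  | Cst complex
  | Add nat nat
  | Sub nat nat
  | Mul nat nat
  | Div nat nat

fun slp_step :: "(nat \<Rightarrow> nat \<Rightarrow> nat \<Rightarrow> complex) \<Rightarrow> (nat \<Rightarrow> nat \<Rightarrow> complex)
                 \<Rightarrow> complex list \<Rightarrow> slp_instr \<Rightarrow> complex" where
  "slp_step T V vs (InT i j k) = T i j k"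
| "slp_step T V vs (InV j i) = V j i"
| "slp_step T V vs (Cst c) = c"
| "slp_step T V vs (Add a b) = vs ! a + vs ! b"
| "slp_step T V vs (Sub a b) = vs ! a - vs ! b"
| "slp_step T V vs (Mul a b) = vs ! a * vs ! b"
| "slp_step T V vs (Div a b) = vs ! a / vs ! b"

definition slp_eval :: "(nat \<Rightarrow> nat \<Rightarrow> nat \<Rightarrow> complex) \<Rightarrow> (nat \<Rightarrow> nat \<Rightarrow> complex)
                 \<Rightarrow> slp_instr list \<Rightarrow> complex list" where
  "slp_eval T V prog = foldl (\<lambda>vs ins. vs @ [slp_step T V vs ins]) [] prog"

fun instr_wf :: "nat \<Rightarrow> slp_instr \<Rightarrow> bool" where
  "instr_wf p (Add a b) = (a < p \<and> b < p)"
| "instr_wf p (Sub a b) = (a < p \<and> b < p)"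
| "instr_wf p (Mul a b) = (a < p \<and> b < p)"
| "instr_wf p (Div a b) = (a < p \<and> b < p)"
| "instr_wf p _ = True"

definition slp_wf :: "slp_instr list \<Rightarrow> bool" where
  "slp_wf prog = (\<forall>p < length prog. instr_wf p (prog ! p))"

fun is_arith :: "slp_instr \<Rightarrow> bool" where
  "is_arith (Add _ _) = True"
| "is_arith (Sub _ _) = True"
| "is_arith (Mul _ _) = True"
| "is_arith (Div _ _) = True"
| "is_arith _ = False"

definition arith_cost :: "slp_instr list \<Rightarrow> nat" where
  "arith_cost prog = length (filter is_arith prog)"

definition symmetric_tensor3 :: "nat \<Rightarrow> (nat \<Rightarrow> nat \<Rightarrow> nat \<Rightarrow> complex) \<Rightarrow> bool" where
  "symmetric_tensor3 n T = (\<forall>i<n. \<forall>j<n. \<forall>k<n.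
      T i j k = T j i k \<and> T i j k = T i k j)"

definition multilin :: "nat \<Rightarrow> (nat \<Rightarrow> nat \<Rightarrow> complex) \<Rightarrow> (nat \<Rightarrow> nat \<Rightarrow> nat \<Rightarrow> complex)
                        \<Rightarrow> nat \<Rightarrow> nat \<Rightarrow> nat \<Rightarrow> complex" where
  "multilin n V T i1 i2 i3 =
     (\<Sum>j1<n. \<Sum>j2<n. \<Sum>j3<n. V j1 i1 * V j2 i2 * V j3 i3 * T j1 j2 j3)"

definition slice_trace :: "nat \<Rightarrow> (nat \<Rightarrow> nat \<Rightarrow> nat \<Rightarrow> complex) \<Rightarrow> nat \<Rightarrow> complex" where
  "slice_trace r S k = (\<Sum>i<r. S i i k)"

end

theory Submission
  imports Defs
begin

(* Summing S i i k over i < r first gives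
     s_k = sum_{j1,j2,j3} W j1 j2 * V j3 k * T j1 j2 j3,  where W j1 j2 = sum_{i<r} V j1 i * V j2 i,
   that is s_k = sum_j3 V j3 k * u j3 with u j3 = sum_{j1,j2} W j1 j2 * T j1 j2 j3.
   The Gram matrix W = V V^T, the vector u and the traces s are batches of inner products costing
   2 n^2 r, 2 n^3 and 2 n r operations, so for r <= n at most 6 n^3 in total. *)

definition slp_run :: "(nat \<Rightarrow> nat \<Rightarrow> nat \<Rightarrow> complex) \<Rightarrow> (nat \<Rightarrow> nat \<Rightarrow> complex)
    \<Rightarrow> complex list \<Rightarrow> slp_instr list \<Rightarrow> complex list" where
  "slp_run T V vs prog = foldl (\<lambda>vs ins. vs @ [slp_step T V vs ins]) vs prog"

lemma slp_eval_eq_slp_run: "slp_eval T V prog = slp_run T V [] prog"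
  by (simp add: slp_eval_def slp_run_def)

lemma slp_run_Nil [simp]: "slp_run T V vs [] = vs"
  by (simp add: slp_run_def)

lemma slp_run_append [simp]:
  "slp_run T V vs (xs @ ys) = slp_run T V (slp_run T V vs xs) ys"
  by (simp add: slp_run_def)

lemma slp_run_Cons [simp]:
  "slp_run T V vs (ins # prog) = slp_run T V (vs @ [slp_step T V vs ins]) prog"
  by (simp add: slp_run_def)

lemma length_slp_run [simp]: "length (slp_run T V vs prog) = length vs + length prog"
  by (induction prog arbitrary: vs) simp_all

lemma nth_slp_run_prefix [simp]: "i < length vs \<Longrightarrow> slp_run T V vs prog ! i = vs ! i"
  by (induction prog arbitrary: vs) (simp_all add: nth_append)

lemma slp_run_inputs:
  "\<forall>ins\<in>set prog. \<not> is_arith ins \<Longrightarrow> slp_run T V vs prog = vs @ map (slp_step T V []) prog"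
proof (induction prog arbitrary: vs)
  case (Cons ins prog)
  then have "slp_step T V vs ins = slp_step T V [] ins" by (cases ins) simp_all
  with Cons show ?case by simp
qed simp

definition slp_wf_at :: "nat \<Rightarrow> slp_instr list \<Rightarrow> bool" where
  "slp_wf_at p prog = (\<forall>i < length prog. instr_wf (p + i) (prog ! i))"

lemma slp_wf_eq_slp_wf_at: "slp_wf prog = slp_wf_at 0 prog"
  by (simp add: slp_wf_def slp_wf_at_def)

lemma slp_wf_at_Nil [simp]: "slp_wf_at p []"
  by (simp add: slp_wf_at_def)

lemma slp_wf_at_Cons [simp]:
  "slp_wf_at p (ins # prog) \<longleftrightarrow> instr_wf p ins \<and> slp_wf_at (Suc p) prog"
  by (simp add: slp_wf_at_def All_less_Suc2)

lemma slp_wf_at_append [simp]: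
  "slp_wf_at p (xs @ ys) \<longleftrightarrow> slp_wf_at p xs \<and> slp_wf_at (p + length xs) ys"
  by (induction xs arbitrary: p) simp_all

lemma slp_wf_at_inputs: "\<forall>ins\<in>set prog. \<not> is_arith ins \<Longrightarrow> slp_wf_at p prog"
proof (induction prog arbitrary: p)
  case (Cons ins prog)
  then show ?case by (cases ins) simp_all
qed simp

lemma arith_cost_Nil [simp]: "arith_cost [] = 0"
  by (simp add: arith_cost_def)

lemma arith_cost_append [simp]: "arith_cost (xs @ ys) = arith_cost xs + arith_cost ys"
  by (simp add: arith_cost_def)

lemma arith_cost_inputs: "\<forall>ins\<in>set prog. \<not> is_arith ins \<Longrightarrow> arith_cost prog = 0"
  by (simp add: arith_cost_def filter_empty_conv)

(* The sum of the first s products is stored at p + 2 * s, p being the address of the first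
   instruction. *)
fun dot_code :: "nat \<Rightarrow> (nat \<Rightarrow> nat) \<Rightarrow> (nat \<Rightarrow> nat) \<Rightarrow> nat \<Rightarrow> slp_instr list" where
  "dot_code p a b 0 = [Cst 0]"
| "dot_code p a b (Suc L) = dot_code p a b L @ [Mul (a L) (b L), Add (p + 2 * L) (p + 2 * L + 1)]"

lemma length_dot_code [simp]: "length (dot_code p a b L) = 2 * L + 1"
  by (induction L) simp_all

lemma arith_cost_dot_code [simp]: "arith_cost (dot_code p a b L) = 2 * L"
  by (induction L) (simp_all add: arith_cost_def)

lemma slp_wf_at_dot_code:
  "(\<And>s. s < L \<Longrightarrow> a s < p \<and> b s < p) \<Longrightarrow> slp_wf_at p (dot_code p a b L)"
proof (induction L)
  case (Suc L)
  then have "slp_wf_at p (dot_code p a b L)" "a L < p" "b L < p" by simp_all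
  then show ?case by simp
qed simp

lemma slp_run_dot_code:
  assumes "length vs = p"
    and "\<And>s. s < L \<Longrightarrow> a s < p \<and> b s < p"
  shows "slp_run T V vs (dot_code p a b L) ! (p + 2 * L) = (\<Sum>s<L. vs ! a s * vs ! b s)"
  using assms(2) unfolding assms(1)[symmetric]
proof (induction L)
  case (Suc L)
  let ?ws = "slp_run T V vs (dot_code (length vs) a b L)"
  have "a L < length vs" "b L < length vs" using Suc.prems by simp_all
  moreover have "?ws ! (length vs + 2 * L) = (\<Sum>s<L. vs ! a s * vs ! b s)"
    using Suc by simp
  ultimately show ?case by (simp add: nth_append)
qed simp

fun dot_codes :: "nat \<Rightarrow> nat \<Rightarrow> (nat \<Rightarrow> nat \<Rightarrow> nat) \<Rightarrow> (nat \<Rightarrow> nat \<Rightarrow> nat) \<Rightarrow> nat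
    \<Rightarrow> slp_instr list" where
  "dot_codes p L a b 0 = []"
| "dot_codes p L a b (Suc m) =
     dot_codes p L a b m @ dot_code (p + m * (2 * L + 1)) (a m) (b m) L"

definition dot_codes_out :: "nat \<Rightarrow> nat \<Rightarrow> nat \<Rightarrow> nat" where
  "dot_codes_out p L k = p + k * (2 * L + 1) + 2 * L"

lemma length_dot_codes [simp]: "length (dot_codes p L a b m) = m * (2 * L + 1)"
  by (induction m) simp_all

lemma arith_cost_dot_codes [simp]: "arith_cost (dot_codes p L a b m) = m * (2 * L)"
  by (induction m) simp_all

lemma dot_codes_out_less: "k < m \<Longrightarrow> dot_codes_out p L k < p + m * (2 * L + 1)"
proof -
  assume "k < m"
  then have "(k + 1) * (2 * L + 1) \<le> m * (2 * L + 1)" by (intro mult_le_mono1) simp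
  then show ?thesis by (simp add: dot_codes_out_def)
qed

lemma slp_wf_at_dot_codes:
  assumes "\<And>k s. k < m \<Longrightarrow> s < L \<Longrightarrow> a k s < p \<and> b k s < p"
  shows "slp_wf_at p (dot_codes p L a b m)"
  using assms
proof (induction m)
  case (Suc m)
  have "slp_wf_at (p + m * (2 * L + 1)) (dot_code (p + m * (2 * L + 1)) (a m) (b m) L)"
    using Suc.prems by (intro slp_wf_at_dot_code) (simp add: trans_less_add1)
  with Suc show ?case by simp
qed simp

lemma slp_run_dot_codes:
  assumes "length vs = p"
    and "\<And>k s. k < m \<Longrightarrow> s < L \<Longrightarrow> a k s < p \<and> b k s < p"
    and "k < m"
  shows "slp_run T V vs (dot_codes p L a b m) ! dot_codes_out p L k =
           (\<Sum>s<L. vs ! a k s * vs ! b k s)"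
  using assms(2,3) unfolding assms(1)[symmetric]
proof (induction m)
  case (Suc m)
  let ?ws = "slp_run T V vs (dot_codes (length vs) L a b m)"
  show ?case
  proof (cases "k < m")
    case True
    then show ?thesis
      using Suc dot_codes_out_less[OF True, of "length vs" L] by (simp add: nth_append)
  next
    case False
    with Suc.prems have "k = m" by simp
    have "slp_run T V ?ws (dot_code (length ?ws) (a m) (b m) L) ! (length ?ws + 2 * L) =
          (\<Sum>s<L. ?ws ! a m s * ?ws ! b m s)"
      using Suc.prems(1)[of m] by (intro slp_run_dot_code) (simp_all add: trans_less_add1)
    then show ?thesis
      using Suc.prems(1)[of m] \<open>k = m\<close> by (simp add: dot_codes_out_def add.assoc)
  qed
qed simp


lemma index_less_mult: "i < m \<Longrightarrow> j < c \<Longrightarrow> i * c + j < m * (c::nat)"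
proof -
  assume "i < m" "j < c"
  then have "i * c + j < (i + 1) * c" by simp
  also have "\<dots> \<le> m * c" using \<open>i < m\<close> by (intro mult_le_mono1) simp
  finally show ?thesis .
qed

lemma div_mod_less_of_less_mult: "q < m * n \<Longrightarrow> q div n < m \<and> q mod n < (n::nat)"
  by (cases "n = 0") (simp_all add: less_mult_imp_div_less)

lemma sum_lessThan_mult_div_mod:
  "(\<Sum>q < m * n. g (q div n) (q mod n)) = (\<Sum>i<m. \<Sum>j<(n::nat). g i j)"
proof -
  have "(\<Sum>q < m * n. g (q div n) (q mod n)) = (\<Sum>(i, j) \<in> {..<m} \<times> {..<n}. g i j)"
    by (rule sum.reindex_bij_witness[where i = "\<lambda>(i, j). i * n + j" and j = "\<lambda>q. (q div n, q mod n)"])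
       (auto simp: index_less_mult div_mod_less_of_less_mult)
  then show ?thesis by (simp add: sum.cartesian_product)
qed

definition gram :: "nat \<Rightarrow> (nat \<Rightarrow> nat \<Rightarrow> complex) \<Rightarrow> nat \<Rightarrow> nat \<Rightarrow> complex" where
  "gram r V j1 j2 = (\<Sum>i<r. V j1 i * V j2 i)"

lemma slice_trace_multilin:
  "slice_trace r (multilin n V T) k =
     (\<Sum>j3<n. V j3 k * (\<Sum>j1<n. \<Sum>j2<n. gram r V j1 j2 * T j1 j2 j3))"
proof -
  have "slice_trace r (multilin n V T) k =
      (\<Sum>j1<n. \<Sum>j2<n. \<Sum>j3<n. \<Sum>i<r. V j1 i * V j2 i * V j3 k * T j1 j2 j3)"
    unfolding slice_trace_def multilin_def
    by (subst sum.swap, rule sum.cong[OF refl], subst sum.swap, rule sum.cong[OF refl], subst sum.swap) simp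
  also have "\<dots> = (\<Sum>j3<n. \<Sum>j1<n. \<Sum>j2<n. \<Sum>i<r. V j1 i * V j2 i * V j3 k * T j1 j2 j3)"
    by (subst sum.swap, rule sum.cong[OF refl], subst sum.swap) simp
  also have "\<dots> = (\<Sum>j3<n. V j3 k * (\<Sum>j1<n. \<Sum>j2<n. gram r V j1 j2 * T j1 j2 j3))"
    by (simp add: gram_def sum_distrib_left sum_distrib_right mult_ac)
  finally show ?thesis .
qed

definition input_code :: "nat \<Rightarrow> nat \<Rightarrow> slp_instr list" where
  "input_code n r =
     map (\<lambda>q. InV (q div r) (q mod r)) [0..<n * r] @
     map (\<lambda>q. InT (q div n div n) (q div n mod n) (q mod n)) [0..<n * n * n]"

definition gram_base :: "nat \<Rightarrow> nat \<Rightarrow> nat" where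
  "gram_base n r = n * r + n * n * n"

definition contr_base :: "nat \<Rightarrow> nat \<Rightarrow> nat" where
  "contr_base n r = gram_base n r + n * n * (2 * r + 1)"

definition trace_base :: "nat \<Rightarrow> nat \<Rightarrow> nat" where
  "trace_base n r = contr_base n r + n * (2 * (n * n) + 1)"

definition V_addr :: "nat \<Rightarrow> nat \<Rightarrow> nat \<Rightarrow> nat" where
  "V_addr r j i = j * r + i"

definition T_addr :: "nat \<Rightarrow> nat \<Rightarrow> nat \<Rightarrow> nat \<Rightarrow> nat" where
  "T_addr n r q j = n * r + q * n + j"

definition gram_addr :: "nat \<Rightarrow> nat \<Rightarrow> nat \<Rightarrow> nat" where
  "gram_addr n r q = dot_codes_out (gram_base n r) r q"

definition contr_addr :: "nat \<Rightarrow> nat \<Rightarrow> nat \<Rightarrow> nat" where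
  "contr_addr n r j = dot_codes_out (contr_base n r) (n * n) j"

definition trace_addr :: "nat \<Rightarrow> nat \<Rightarrow> nat \<Rightarrow> nat" where
  "trace_addr n r k = dot_codes_out (trace_base n r) n k"

definition slice_trace_prog :: "nat \<Rightarrow> nat \<Rightarrow> slp_instr list" where
  "slice_trace_prog n r =
     input_code n r @
     dot_codes (gram_base n r) r (\<lambda>q. V_addr r (q div n)) (\<lambda>q. V_addr r (q mod n)) (n * n) @
     dot_codes (contr_base n r) (n * n) (\<lambda>j q. gram_addr n r q) (\<lambda>j q. T_addr n r q j) n @
     dot_codes (trace_base n r) n (\<lambda>k t. V_addr r t k) (\<lambda>k t. contr_addr n r t) r"

lemma base_mono:
  "gram_base n r \<le> contr_base n r" "contr_base n r \<le> trace_base n r" "gram_base n r \<le> trace_base n r"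
  by (simp_all add: contr_base_def trace_base_def)

lemma V_addr_less: "j < n \<Longrightarrow> i < r \<Longrightarrow> V_addr r j i < gram_base n r"
  using index_less_mult[of j n i r] by (simp add: V_addr_def gram_base_def)

lemma T_addr_less: "q < n * n \<Longrightarrow> j < n \<Longrightarrow> T_addr n r q j < gram_base n r"
  using index_less_mult[of q "n * n" j n] by (simp add: T_addr_def gram_base_def)

lemma gram_addr_less: "q < n * n \<Longrightarrow> gram_addr n r q < contr_base n r"
  using dot_codes_out_less[of q "n * n" "gram_base n r" r] by (simp add: gram_addr_def contr_base_def)

lemma contr_addr_less: "j < n \<Longrightarrow> contr_addr n r j < trace_base n r"
  using dot_codes_out_less[of j n "contr_base n r" "n * n"] by (simp add: contr_addr_def trace_base_def)

lemma input_code_inputs: "\<forall>ins\<in>set (input_code n r). \<not> is_arith ins"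
  by (auto simp: input_code_def)

lemma length_input_code: "length (input_code n r) = gram_base n r"
  by (simp add: input_code_def gram_base_def)

lemma slp_run_input_code_V:
  assumes "j < n" "i < r"
  shows "slp_run T V [] (input_code n r) ! V_addr r j i = V j i"
  using index_less_mult[OF assms] assms(2) unfolding slp_run_inputs[OF input_code_inputs]
  by (simp add: input_code_def nth_append V_addr_def)

lemma slp_run_input_code_T:
  assumes "q < n * n" "j < n"
  shows "slp_run T V [] (input_code n r) ! T_addr n r q j = T (q div n) (q mod n) j"
  using index_less_mult[OF assms] assms(2) unfolding slp_run_inputs[OF input_code_inputs]
  by (simp add: input_code_def nth_append T_addr_def)

lemma slp_wf_slice_trace_prog: "slp_wf (slice_trace_prog n r)"
proof -
  have "slp_wf_at (gram_base n r)
      (dot_codes (gram_base n r) r (\<lambda>q. V_addr r (q div n)) (\<lambda>q. V_addr r (q mod n)) (n * n))"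
    by (intro slp_wf_at_dot_codes) (simp add: V_addr_less div_mod_less_of_less_mult)
  moreover have "slp_wf_at (contr_base n r)
      (dot_codes (contr_base n r) (n * n) (\<lambda>j q. gram_addr n r q) (\<lambda>j q. T_addr n r q j) n)"
    using gram_addr_less less_le_trans[OF T_addr_less base_mono(1)]
    by (intro slp_wf_at_dot_codes) simp
  moreover have "slp_wf_at (trace_base n r)
      (dot_codes (trace_base n r) n (\<lambda>k t. V_addr r t k) (\<lambda>k t. contr_addr n r t) r)"
    using contr_addr_less less_le_trans[OF V_addr_less base_mono(3)]
    by (intro slp_wf_at_dot_codes) simp
  ultimately show ?thesis
    unfolding slp_wf_eq_slp_wf_at slice_trace_prog_def
    by (simp add: slp_wf_at_inputs[OF input_code_inputs] length_input_code contr_base_def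
        trace_base_def)
qed

lemma trace_addr_less: "k < r \<Longrightarrow> trace_addr n r k < length (slice_trace_prog n r)"
  using dot_codes_out_less[of k r "trace_base n r" n]
  by (simp add: trace_addr_def slice_trace_prog_def length_input_code trace_base_def contr_base_def)

lemma arith_cost_slice_trace_prog_le:
  assumes "r \<le> n"
  shows "arith_cost (slice_trace_prog n r) \<le> 6 * n ^ 3"
proof -
  have "arith_cost (slice_trace_prog n r) = 2 * (n * n * r) + 2 * (n * (n * n)) + 2 * (r * n)"
    by (simp add: slice_trace_prog_def arith_cost_inputs[OF input_code_inputs])
  also have "\<dots> \<le> 2 * (n * n * n) + 2 * (n * (n * n)) + 2 * (n * (n * n))"
    by (intro add_mono mult_le_mono order.refl assms le_square)
  finally show ?thesis by (simp add: power3_eq_cube)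
qed

lemma slp_eval_slice_trace_prog:
  assumes "k < r"
  shows "slp_eval T V (slice_trace_prog n r) ! trace_addr n r k =
           (\<Sum>t<n. V t k * (\<Sum>j1<n. \<Sum>j2<n. gram r V j1 j2 * T j1 j2 t))"
proof -
  define vs1 where "vs1 = slp_run T V [] (input_code n r)"
  define vs2 where "vs2 = slp_run T V vs1
      (dot_codes (gram_base n r) r (\<lambda>q. V_addr r (q div n)) (\<lambda>q. V_addr r (q mod n)) (n * n))"
  define vs3 where "vs3 = slp_run T V vs2
      (dot_codes (contr_base n r) (n * n) (\<lambda>j q. gram_addr n r q) (\<lambda>j q. T_addr n r q j) n)"
  have len: "length vs1 = gram_base n r" "length vs2 = contr_base n r" "length vs3 = trace_base n r"
    by (simp_all add: vs1_def vs2_def vs3_def length_input_code contr_base_def trace_base_def)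
  have V_val: "vs3 ! V_addr r j i = V j i" if "j < n" "i < r" for j i
    using slp_run_input_code_V[OF that] V_addr_less[OF that] base_mono len
    by (simp add: vs1_def vs2_def vs3_def)
  have gram_val: "vs2 ! gram_addr n r q = gram r V (q div n) (q mod n)" if "q < n * n" for q
  proof -
    have "q div n < n" "q mod n < n" using div_mod_less_of_less_mult[OF that] by simp_all
    then show ?thesis
      unfolding vs2_def gram_addr_def gram_def using V_addr_less slp_run_input_code_V len(1)
      by (subst slp_run_dot_codes[OF len(1) _ that]) (simp_all add: vs1_def div_mod_less_of_less_mult)
  qed
  have contr_val: "vs3 ! contr_addr n r j = (\<Sum>j1<n. \<Sum>j2<n. gram r V j1 j2 * T j1 j2 j)"
    if "j < n" for j
  proof -
    have "vs3 ! contr_addr n r j =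
        (\<Sum>q<n * n. vs2 ! gram_addr n r q * vs2 ! T_addr n r q j)"
      unfolding vs3_def contr_addr_def using that gram_addr_less less_le_trans[OF T_addr_less base_mono(1)]
      by (subst slp_run_dot_codes[OF len(2)]) simp_all
    also have "\<dots> = (\<Sum>q<n * n. gram r V (q div n) (q mod n) * T (q div n) (q mod n) j)"
      using gram_val T_addr_less slp_run_input_code_T that len(1) by (simp add: vs2_def vs1_def)
    also have "\<dots> = (\<Sum>j1<n. \<Sum>j2<n. gram r V j1 j2 * T j1 j2 j)"
      by (rule sum_lessThan_mult_div_mod[where g = "\<lambda>j1 j2. gram r V j1 j2 * T j1 j2 j"])
    finally show ?thesis .
  qed
  have "slp_eval T V (slice_trace_prog n r) =
      slp_run T V vs3 (dot_codes (trace_base n r) n (\<lambda>k t. V_addr r t k) (\<lambda>k t. contr_addr n r t) r)"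
    by (simp add: slp_eval_eq_slp_run slice_trace_prog_def vs1_def vs2_def vs3_def)
  also have "\<dots> ! trace_addr n r k = (\<Sum>t<n. vs3 ! V_addr r t k * vs3 ! contr_addr n r t)"
    unfolding trace_addr_def using assms contr_addr_less less_le_trans[OF V_addr_less base_mono(3)]
    by (subst slp_run_dot_codes[OF len(3)]) simp_all
  also have "\<dots> = (\<Sum>t<n. V t k * (\<Sum>j1<n. \<Sum>j2<n. gram r V j1 j2 * T j1 j2 t))"
    using V_val contr_val assms by simp
  finally show ?thesis .
qed

theorem theorem3p3:
  shows "\<exists>C::real. \<forall>n r. r \<le> n \<longrightarrow>
    (\<exists>prog outs. slp_wf prog \<and> length outs = r \<and> (\<forall>q\<in>set outs. q < length prog) \<and>
       real (arith_cost prog) \<le> C * real n ^ 3 \<and>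
       (\<forall>T V. symmetric_tensor3 n T \<longrightarrow>
          (\<forall>i<r. slp_eval T V prog ! (outs ! i) = slice_trace r (multilin n V T) i)))"
proof (intro exI[of _ 6] allI impI, goal_cases)
  case (1 n r)
  then have "real (arith_cost (slice_trace_prog n r)) \<le> 6 * real n ^ 3"
    using of_nat_mono[OF arith_cost_slice_trace_prog_le] by simp
  then show ?case
    using slp_wf_slice_trace_prog trace_addr_less
    by (intro exI[of _ "slice_trace_prog n r"] exI[of _ "map (trace_addr n r) [0..<r]"])
       (auto simp: slp_eval_slice_trace_prog slice_trace_multilin)
qed

end
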